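(* Let $n\geq7$ and let $\mathcal R(P_{n-5})=u_1,\ldots,u_p$. If $u_iu_k>_{\mathcal R}u_ju_l$ in $F(J(P_{n-5})^2)$ for some indices $i,j,k,l$, then $x_nx_{n-1}x_{n-2}^2x_{n-4}^2u_iu_k>_{\mathcal R}x_nx_{n-1}x_{n-2}^2x_{n-4}^2u_ju_l$ in $F(J(P_n)^2)$.
   Context: For $m\geq 1$, $P_m$ is the path graph on vertices $x_1,\ldots,x_m$ with edges $\{x_i,x_{i+1}\}$; $J(P_m)$ is its cover ideal (generated by $\prod_{x\in C}x$, $C$ a minimal vertex cover); $G(I)$ denotes minimal monomial generators and $F(I^2)=\{ab:a,b\in G(I)\}$. The rooted list $\mathcal R(P_m)$: $\mathcal R(P_1)$ empty; $\mathcal R(P_2)=x_1,x_2$; $\mathcal R(P_3)=x_2,x_1x_3$; $\mathcal R(P_4)=x_1x_3,x_2x_3,x_2x_4$; for $m\geq5$, if $\mathcal R(P_{m-2})=u_1,\ldots,u_r$ and $\mathcal R(P_{m-3})=v_1,\ldots,v_s$, then $\mathcal R(P_m)=x_{m-1}u_1,\ldots,x_{m-1}u_r,x_mx_{m-2}v_1,\ldots,x_mx_{m-2}v_s$; it lists each element of $G(J(P_m))$ once. With $\mathcal R(P_m)=u_1,\ldots,u_q$, each $M\in F(J(P_m)^2)$ is $u_1^{a_1}\cdots u_q^{a_q}$ with $a_i\geq0$, $\sum a_i=2$; its maximal expression is the one with lexicographically largest exponent vector, and $M>_{\mathcal R}N$ on $F(J(P_m)^2)$ iff the maximal-expression exponent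 vector of $M$ is lexicographically larger than that of $N$. *)

theory Defs
  imports "HOL-Library.Multiset" "HOL-Library.List_Lexorder"
begin

text \<open>Monomials in the variables x_1, x_2, ... are represented as multisets of
variable indices: the monomial x_1^{e_1} x_2^{e_2} ... is the multiset in which
i occurs e_i times. Multiplication of monomials is multiset sum.\<close>

type_synonym monomial = "nat multiset"

definition path_vertex_cover :: "nat \<Rightarrow> nat set \<Rightarrow> bool" where
  "path_vertex_cover m C \<longleftrightarrow> C \<subseteq> {1..m} \<and> (\<forall>i. 1 \<le> i \<and> i < m \<longrightarrow> i \<in> C \<or> Suc i \<in> C)"

definition path_min_vertex_cover :: "nat \<Rightarrow> nat set \<Rightarrow> bool" where
  "path_min_vertex_cover m C \<longleftrightarrow> path_vertex_cover m C \<and> (\<forall>D. D \<subset> C \<longrightarrow> \<not> path_vertex_cover m D)"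

text \<open>G(J(P_m)): minimal monomial generators of the cover ideal.\<close>
definition GJ :: "nat \<Rightarrow> monomial set" where
  "GJ m = {mset_set C | C. path_min_vertex_cover m C}"

definition FJ2 :: "nat \<Rightarrow> monomial set" where
  "FJ2 m = {a + b | a b. a \<in> GJ m \<and> b \<in> GJ m}"

fun rooted :: "nat \<Rightarrow> monomial list" where
  "rooted 0 = []"
| "rooted (Suc 0) = []"
| "rooted (Suc (Suc 0)) = [{#1#}, {#2#}]"
| "rooted (Suc (Suc (Suc 0))) = [{#2#}, {#1, 3#}]"
| "rooted (Suc (Suc (Suc (Suc 0)))) = [{#1, 3#}, {#2, 3#}, {#2, 4#}]"
| "rooted (Suc (Suc (Suc (Suc (Suc k))))) =
     map (\<lambda>u. add_mset (k + 4) u) (rooted (k + 3)) @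
     map (\<lambda>v. {#k + 5, k + 3#} + v) (rooted (k + 2))"

definition expr_mono :: "monomial list \<Rightarrow> nat list \<Rightarrow> monomial" where
  "expr_mono us a = sum_list (map2 (\<lambda>e u. repeat_mset e u) a us)"

definition expressions :: "monomial list \<Rightarrow> monomial \<Rightarrow> nat list set" where
  "expressions us M = {a. length a = length us \<and> sum_list a = 2 \<and> expr_mono us a = M}"

text \<open>Maximal expression: lexicographically largest exponent vector
 (lists of equal length; the order from List_Lexorder is lexicographic).\<close>
definition max_expr :: "monomial list \<Rightarrow> monomial \<Rightarrow> nat list" where
  "max_expr us M = Max (expressions us M)"

definition R_greater :: "nat \<Rightarrow> monomial \<Rightarrow> monomial \<Rightarrow> bool" where
  "R_greater m M N \<longleftrightarrow> max_expr (rooted m) N < max_expr (rooted m) M"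

end

theory Submission
  imports Defs "HOL-Library.Product_Lexorder"
begin

text \<open>
  The maximal expression of a product u_a u_b is the exponent vector of the lexicographically
  least sorted index pair (a, b) representing it, so >_R compares these least pairs in reverse
  order. Unfolding the recursion of the rooted list twice, R(P_{m+7}) consists of a block A, the
  block x_{m+6} x_{m+5} x_{m+3} R(P_{m+2}), the block x_{m+7} x_{m+5} x_{m+3} R(P_{m+2}) and a
  block D, where every entry of A and D contains x_{m+4}. The multiplier
  w = x_{m+7} x_{m+6} x_{m+5}^2 x_{m+3}^2 contains no x_{m+4} and exactly one x_{m+6} and one
  x_{m+7}, so every expression of w N with N in x_1, ..., x_{m+2} takes its first factor from the
  first middle block and its second from the second. The index pairs of w N are therefore those
  of N (in either order) under an order embedding, and the least pairs are compared in the same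
  way.
\<close>

definition pair_exps :: "nat \<Rightarrow> nat \<times> nat \<Rightarrow> nat list" where
  "pair_exps q ab = map (\<lambda>t. of_bool (t = fst ab) + of_bool (t = snd ab)) [0..<q]"

definition index_pairs :: "monomial list \<Rightarrow> monomial \<Rightarrow> (nat \<times> nat) set" where
  "index_pairs us M = {(a, b). a \<le> b \<and> b < length us \<and> us ! a + us ! b = M}"

lemma length_pair_exps [simp]: "length (pair_exps q ab) = q"
  by (simp add: pair_exps_def)

lemma nth_pair_exps [simp]:
  "t < q \<Longrightarrow> pair_exps q (a, b) ! t = of_bool (t = a) + of_bool (t = b)"
  by (simp add: pair_exps_def)

lemma pair_exps_Cons_0: "0 # pair_exps q (a, b) = pair_exps (Suc q) (Suc a, Suc b)"
  by (rule nth_equalityI) (auto simp: nth_Cons split: nat.split)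

lemma pair_exps_eqI:
  assumes "\<forall>t<length v. v ! t = of_bool (t = a) + of_bool (t = b)"
  shows "v = pair_exps (length v) (a, b)"
  using assms by (intro nth_equalityI) auto

lemma sum_list_pair_exps:
  assumes "a < q" "b < q"
  shows "sum_list (pair_exps q (a, b)) = 2"
proof -
  have "sum_list (pair_exps q (a, b)) = (\<Sum>t<q. of_bool (t = a) + of_bool (t = b))"
    by (simp add: pair_exps_def sum_list_sum_nth lessThan_atLeast0)
  also have "\<dots> = 2"
    using assms by (simp add: sum.distrib)
  finally show ?thesis .
qed

lemma expr_mono_pair_exps:
  assumes "a < length us" "b < length us"
  shows "expr_mono us (pair_exps (length us) (a, b)) = us ! a + us ! b"
proof -
  have "expr_mono us (pair_exps (length us) (a, b))
      = (\<Sum>t<length us. repeat_mset (of_bool (t = a) + of_bool (t = b)) (us ! t))"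
    by (simp add: expr_mono_def sum_list_sum_nth lessThan_atLeast0)
  also have "\<dots> = (\<Sum>t<length us. if t = a then us ! t else {#})
                  + (\<Sum>t<length us. if t = b then us ! t else {#})"
    by (subst sum.distrib[symmetric], rule sum.cong) auto
  also have "\<dots> = us ! a + us ! b"
    using assms by simp
  finally show ?thesis .
qed

lemma sum_list_eq_1_unit:
  fixes v :: "nat list"
  assumes "sum_list v = 1"
  shows "\<exists>a<length v. \<forall>t<length v. v ! t = of_bool (t = a)"
  using assms
proof (induction v)
  case (Cons x v)
  show ?case
  proof (cases x)
    case 0
    with Cons obtain a where "a < length v" "\<forall>t<length v. v ! t = of_bool (t = a)"
      by auto
    with 0 show ?thesis
      by (intro exI[of _ "Suc a"]) (auto simp: nth_Cons split: nat.split)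
  next
    case (Suc y)
    with Cons.prems have "x = 1" "sum_list v = 0" by auto
    then show ?thesis
      by (intro exI[of _ 0]) (auto simp: nth_Cons split: nat.split)
  qed
qed simp

lemma sum_list_eq_2_pair_exps:
  fixes v :: "nat list"
  assumes "sum_list v = 2"
  shows "\<exists>a b. a \<le> b \<and> b < length v \<and> v = pair_exps (length v) (a, b)"
  using assms
proof (induction v)
  case (Cons x v)
  consider "x = 0" "sum_list v = 2" | "x = 1" "sum_list v = 1" | "x = 2" "sum_list v = 0"
    using Cons.prems by fastforce
  then show ?case
  proof cases
    case 1
    with Cons.IH obtain a b where "a \<le> b" "b < length v" "v = pair_exps (length v) (a, b)"
      by blast
    with 1 have "x # v = pair_exps (length (x # v)) (Suc a, Suc b)"
      using pair_exps_Cons_0 by (metis length_Cons)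
    with \<open>a \<le> b\<close> \<open>b < length v\<close> show ?thesis
      by (metis Suc_le_mono Suc_less_eq length_Cons)
  next
    case 2
    then obtain b where "b < length v" "\<forall>t<length v. v ! t = of_bool (t = b)"
      using sum_list_eq_1_unit by blast
    with 2 have "x # v = pair_exps (length (x # v)) (0, Suc b)"
      by (intro pair_exps_eqI) (auto simp: nth_Cons split: nat.split)
    with \<open>b < length v\<close> show ?thesis
      by (metis Suc_less_eq length_Cons zero_le)
  next
    case 3
    then have "x # v = pair_exps (length (x # v)) (0, 0)"
      by (intro pair_exps_eqI) (auto simp: nth_Cons split: nat.split)
    then show ?thesis
      by (metis length_Cons zero_less_Suc order_refl)
  qed
qed simp

lemma expressions_eq_pair_exps_image:
  "expressions us M = pair_exps (length us) ` index_pairs us M"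
proof (intro equalityI subsetI)
  fix v assume v: "v \<in> expressions us M"
  then obtain a b where ab: "a \<le> b" "b < length us" and v_eq: "v = pair_exps (length us) (a, b)"
    using sum_list_eq_2_pair_exps unfolding expressions_def by force
  have "us ! a + us ! b = M"
    using v ab unfolding v_eq expressions_def by (simp add: expr_mono_pair_exps)
  with ab have "(a, b) \<in> index_pairs us M"
    by (simp add: index_pairs_def)
  then show "v \<in> pair_exps (length us) ` index_pairs us M"
    unfolding v_eq by blast
next
  fix v assume "v \<in> pair_exps (length us) ` index_pairs us M"
  then obtain a b where "a \<le> b" "b < length us" "us ! a + us ! b = M"
    and v_eq: "v = pair_exps (length us) (a, b)"
    by (auto simp: index_pairs_def)
  then show "v \<in> expressions us M"
    by (simp add: expressions_def expr_mono_pair_exps sum_list_pair_exps)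
qed

lemma list_less_at_first_difference:
  fixes xs ys :: "'a::order list"
  assumes "length xs = length ys" "i < length xs" "take i xs = take i ys" "xs ! i < ys ! i"
  shows "xs < ys"
  using assms unfolding list_less_def lexord_take_index_conv by auto

lemma pair_exps_less:
  assumes "(c, d) < (a, b)" "a \<le> b" "c \<le> d" "b < q" "d < q"
  shows "pair_exps q (a, b) < pair_exps q (c, d)"
proof (cases "c < a")
  case True
  with assms show ?thesis
    by (intro list_less_at_first_difference[where i = c] nth_equalityI) auto
next
  case False
  with assms have "c = a" "d < b" by auto
  with assms show ?thesis
    by (intro list_less_at_first_difference[where i = d] nth_equalityI) auto
qed

lemma finite_index_pairs: "finite (index_pairs us M)"
  by (rule finite_subset[of _ "{..<length us} \<times> {..<length us}"])
    (auto simp: index_pairs_def)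

lemma index_pairs_nth_add_nonempty:
  assumes "i < length us" "k < length us"
  shows "index_pairs us (us ! i + us ! k) \<noteq> {}"
proof -
  have "(min i k, max i k) \<in> index_pairs us (us ! i + us ! k)"
    using assms by (auto simp: index_pairs_def min_def max_def add.commute)
  then show ?thesis by blast
qed

lemma index_pairs_sorted: "(a, b) \<in> index_pairs us M \<Longrightarrow> a \<le> b \<and> b < length us"
  by (simp add: index_pairs_def)

lemma Min_index_pairs_sorted:
  assumes "index_pairs us M \<noteq> {}" "Min (index_pairs us M) = (a, b)"
  shows "a \<le> b" "b < length us"
  using Min_in[OF finite_index_pairs assms(1)] assms(2) index_pairs_sorted by metis+

lemma max_expr_eq_pair_exps_Min:
  assumes "index_pairs us M \<noteq> {}"
  shows "max_expr us M = pair_exps (length us) (Min (index_pairs us M))"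
  unfolding max_expr_def expressions_eq_pair_exps_image
proof (rule Max_eqI)
  show "pair_exps (length us) (Min (index_pairs us M)) \<in> pair_exps (length us) ` index_pairs us M"
    using assms finite_index_pairs by simp
next
  fix v assume "v \<in> pair_exps (length us) ` index_pairs us M"
  then obtain a b where ab: "(a, b) \<in> index_pairs us M" and v: "v = pair_exps (length us) (a, b)"
    by auto
  obtain c d where cd: "Min (index_pairs us M) = (c, d)"
    by fastforce
  have "(c, d) \<le> (a, b)"
    using ab finite_index_pairs cd by (metis Min_le)
  moreover note Min_index_pairs_sorted[OF assms cd] index_pairs_sorted[OF ab]
  ultimately show "v \<le> pair_exps (length us) (Min (index_pairs us M))"
    unfolding v cd using ab by (auto simp: order.order_iff_strict intro: pair_exps_less)
qed (use finite_index_pairs in simp)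

lemma max_expr_less_iff:
  assumes "index_pairs us M \<noteq> {}" "index_pairs us N \<noteq> {}"
  shows "max_expr us N < max_expr us M \<longleftrightarrow> Min (index_pairs us M) < Min (index_pairs us N)"
proof -
  obtain a b c d where ab: "Min (index_pairs us M) = (a, b)" and cd: "Min (index_pairs us N) = (c, d)"
    by fastforce
  note sorted = Min_index_pairs_sorted[OF assms(1) ab] Min_index_pairs_sorted[OF assms(2) cd]
  have "max_expr us N < max_expr us M \<longleftrightarrow> pair_exps (length us) (c, d) < pair_exps (length us) (a, b)"
    by (simp add: max_expr_eq_pair_exps_Min assms ab cd)
  also have "\<dots> \<longleftrightarrow> (a, b) < (c, d)"
  proof
    assume less: "pair_exps (length us) (c, d) < pair_exps (length us) (a, b)"
    show "(a, b) < (c, d)"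
    proof (rule ccontr)
      assume "\<not> (a, b) < (c, d)"
      then consider "(c, d) < (a, b)" | "(c, d) = (a, b)"
        by (metis linorder_neqE)
      then show False
      proof cases
        case 1
        then have "pair_exps (length us) (a, b) < pair_exps (length us) (c, d)"
          using sorted by (intro pair_exps_less)
        with less show False by simp
      next
        case 2
        with less show False by simp
      qed
    qed
  qed (use sorted in \<open>intro pair_exps_less\<close>)
  finally show ?thesis
    by (simp add: ab cd)
qed

lemma Min_ordered_index_pairs:
  assumes "index_pairs us M \<noteq> {}"
  shows "Min {(a, b). a < length us \<and> b < length us \<and> us ! a + us ! b = M} = Min (index_pairs us M)"
proof (rule Min_eqI)
  let ?P = "{(a, b). a < length us \<and> b < length us \<and> us ! a + us ! b = M}"
  fix ab assume "ab \<in> ?P"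
  then obtain a b where ab: "ab = (a, b)" "a < length us" "b < length us" "us ! a + us ! b = M"
    by blast
  have "(min a b, max a b) \<in> index_pairs us M"
    using ab by (auto simp: index_pairs_def min_def max_def add.commute)
  then have "Min (index_pairs us M) \<le> (min a b, max a b)"
    using finite_index_pairs by simp
  also have "(min a b, max a b) \<le> ab"
    using ab by (auto simp: min_def max_def)
  finally show "Min (index_pairs us M) \<le> ab" .
next
  have "Min (index_pairs us M) \<in> index_pairs us M"
    using finite_index_pairs assms by (rule Min_in)
  then show "Min (index_pairs us M) \<in> {(a, b). a < length us \<and> b < length us \<and> us ! a + us ! b = M}"
    by (cases "Min (index_pairs us M)") (simp add: index_pairs_def)
qed (rule finite_subset[of _ "{..<length us} \<times> {..<length us}"], auto)

lemma path_min_vertex_cover_iff: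
  "path_min_vertex_cover m C \<longleftrightarrow>
     path_vertex_cover m C \<and> (\<forall>c\<in>C. (1 < c \<and> c - 1 \<notin> C) \<or> (c < m \<and> Suc c \<notin> C))"
proof
  assume min: "path_min_vertex_cover m C"
  then have cover: "path_vertex_cover m C"
    by (simp add: path_min_vertex_cover_def)
  have "(1 < c \<and> c - 1 \<notin> C) \<or> (c < m \<and> Suc c \<notin> C)" if "c \<in> C" for c
  proof -
    have "\<not> path_vertex_cover m (C - {c})"
      using min that by (auto simp: path_min_vertex_cover_def)
    then obtain i where "1 \<le> i" "i < m" "i \<notin> C - {c}" "Suc i \<notin> C - {c}"
      using cover by (auto simp: path_vertex_cover_def)
    with cover have "c = i \<and> Suc c \<notin> C \<or> c = Suc i \<and> i \<notin> C"
      by (auto simp: path_vertex_cover_def)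
    with \<open>1 \<le> i\<close> \<open>i < m\<close> show ?thesis by auto
  qed
  with cover show "path_vertex_cover m C \<and> (\<forall>c\<in>C. (1 < c \<and> c - 1 \<notin> C) \<or> (c < m \<and> Suc c \<notin> C))"
    by blast
next
  assume "path_vertex_cover m C \<and> (\<forall>c\<in>C. (1 < c \<and> c - 1 \<notin> C) \<or> (c < m \<and> Suc c \<notin> C))"
  then have cover: "path_vertex_cover m C"
    and private_edge: "\<forall>c\<in>C. (1 < c \<and> c - 1 \<notin> C) \<or> (c < m \<and> Suc c \<notin> C)" by blast+
  have "\<not> path_vertex_cover m D" if "D \<subset> C" for D
  proof
    assume D: "path_vertex_cover m D"
    obtain c where c: "c \<in> C" "c \<notin> D" using \<open>D \<subset> C\<close> by blast
    with cover have "1 \<le> c" "c \<le> m"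
      by (auto simp: path_vertex_cover_def)
    from D have edge: "i \<in> D \<or> Suc i \<in> D" if "1 \<le> i" "i < m" for i
      using that by (simp add: path_vertex_cover_def)
    from private_edge c consider "1 < c" "c - 1 \<notin> C" | "c < m" "Suc c \<notin> C"
      by blast
    then show False
    proof cases
      case 1
      with \<open>c \<le> m\<close> have "c - 1 \<in> D \<or> Suc (c - 1) \<in> D"
        by (intro edge) auto
      with 1 c \<open>D \<subset> C\<close> show False by auto
    next
      case 2
      with \<open>1 \<le> c\<close> have "c \<in> D \<or> Suc c \<in> D"
        by (intro edge) auto
      with 2 c \<open>D \<subset> C\<close> show False by auto
    qed
  qed
  with cover show "path_min_vertex_cover m C"
    by (simp add: path_min_vertex_cover_def)
qed

lemma path_min_vertex_cover_insert_penultimate: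
  "path_min_vertex_cover m C \<Longrightarrow> path_min_vertex_cover (m + 2) (insert (m + 1) C)"
  unfolding path_min_vertex_cover_iff path_vertex_cover_def
  by (auto simp: less_Suc_eq)

lemma path_min_vertex_cover_insert_last_antepenultimate:
  "path_min_vertex_cover m C \<Longrightarrow> path_min_vertex_cover (m + 3) (insert (m + 3) (insert (m + 1) C))"
  unfolding path_min_vertex_cover_iff path_vertex_cover_def
  by (auto simp: less_Suc_eq)

lemma rooted_add5:
  "rooted (k + 5) = map (add_mset (k + 4)) (rooted (k + 3)) @ map ((+) {#k + 5, k + 3#}) (rooted (k + 2))"
  using rooted.simps(6)[of k] by (simp add: numeral_eq_Suc)

lemma set_rooted_base:
  "set (rooted 2) = mset_set ` {{1}, {2}}"
  "set (rooted 3) = mset_set ` {{2}, {1, 3}}"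
  "set (rooted 4) = mset_set ` {{1, 3}, {2, 3}, {2, 4}}"
  by (simp_all add: numeral_eq_Suc)

lemma path_min_vertex_cover_base:
  "path_min_vertex_cover 2 {1}" "path_min_vertex_cover 2 {2}"
  "path_min_vertex_cover 3 {2}" "path_min_vertex_cover 3 {1, 3}"
  "path_min_vertex_cover 4 {1, 3}" "path_min_vertex_cover 4 {2, 3}" "path_min_vertex_cover 4 {2, 4}"
  unfolding path_min_vertex_cover_iff path_vertex_cover_def by auto

lemma path_min_vertex_cover_subset: "path_min_vertex_cover m C \<Longrightarrow> C \<subseteq> {1..m}"
  by (simp add: path_min_vertex_cover_def path_vertex_cover_def)

lemma rooted_min_vertex_cover:
  "u \<in> set (rooted m) \<Longrightarrow> \<exists>C. u = mset_set C \<and> path_min_vertex_cover m C"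
proof (induction m arbitrary: u rule: less_induct)
  case (less m)
  have "m < 2 \<or> m = 2 \<or> m = 3 \<or> m = 4 \<or> (\<exists>k. m = k + 5)"
    by presburger
  then consider (small) "m < 2" | (base) "m \<in> {2, 3, 4}" | (large) k where "m = k + 5"
    by blast
  then show ?case
  proof cases
    case small
    then have "rooted m = []"
      by (auto simp: less_2_cases_iff)
    with less.prems show ?thesis
      by simp
  next
    case base
    then have "set (rooted m) \<subseteq> mset_set ` {C. path_min_vertex_cover m C}"
      using path_min_vertex_cover_base
      by (elim insertE emptyE; simp only: set_rooted_base; intro image_mono) auto
    with less.prems show ?thesis
      by blast
  next
    case large
    from less.prems consider
        (penultimate) u' where "u' \<in> set (rooted (k + 3))" "u = add_mset (k + 4) u'"
      | (antepenultimate) v where "v \<in> set (rooted (k + 2))" "u = {#k + 5, k + 3#} + v"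
      unfolding large rooted_add5 by auto
    then show ?thesis
    proof cases
      case penultimate
      with less.IH[of "k + 3"] obtain C where C: "u' = mset_set C" "path_min_vertex_cover (k + 3) C"
        unfolding large by auto
      from C(2) have "C \<subseteq> {1..k + 3}"
        by (rule path_min_vertex_cover_subset)
      then have "finite C" "k + 4 \<notin> C"
        by (auto intro: finite_subset)
      with C penultimate have "u = mset_set (insert (k + 4) C)"
        by simp
      moreover have "path_min_vertex_cover (k + 5) (insert (k + 4) C)"
        using path_min_vertex_cover_insert_penultimate[OF C(2)] by (simp add: eval_nat_numeral)
      ultimately show ?thesis
        unfolding large by blast
    next
      case antepenultimate
      with less.IH[of "k + 2"] obtain C where C: "v = mset_set C" "path_min_vertex_cover (k + 2) C"
        unfolding large by auto
      from C(2) have "C \<subseteq> {1..k + 2}"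
        by (rule path_min_vertex_cover_subset)
      then have "finite C" "k + 3 \<notin> C" "k + 5 \<notin> C"
        by (auto intro: finite_subset)
      with C antepenultimate have "u = mset_set (insert (k + 5) (insert (k + 3) C))"
        by simp
      moreover have "path_min_vertex_cover (k + 5) (insert (k + 5) (insert (k + 3) C))"
        using path_min_vertex_cover_insert_last_antepenultimate[OF C(2)] by (simp add: eval_nat_numeral)
      ultimately show ?thesis
        unfolding large by blast
    qed
  qed
qed

lemma rooted_subset_GJ: "set (rooted m) \<subseteq> GJ m"
  using rooted_min_vertex_cover unfolding GJ_def by blast

lemma rooted_variables:
  assumes "u \<in> set (rooted m)"
  shows "set_mset u \<subseteq> {1..m}"
proof -
  obtain C where "u = mset_set C" "C \<subseteq> {1..m}"
    using rooted_min_vertex_cover[OF assms] path_min_vertex_cover_subset by blast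
  moreover from this(2) have "finite C"
    by (rule finite_subset) simp
  ultimately show ?thesis
    by simp
qed

locale block_list =
  fixes A L D :: "monomial list" and b c :: monomial and V :: "nat set" and x y z :: nat
  assumes outer_blocks: "\<forall>u\<in>set A \<union> set D. z \<in># u" and z_notin: "z \<notin># b + c" "z \<notin> V"
    and x_separates: "x \<in># b" "x \<notin># c" "x \<notin> V"
    and y_separates: "y \<in># c" "y \<notin># b" "y \<notin> V"
    and inner_variables: "\<forall>u\<in>set L. set_mset u \<subseteq> V"
begin

definition blocks :: "monomial list" where
  "blocks = A @ map ((+) b) L @ map ((+) c) L @ D"

definition shift :: "nat \<times> nat \<Rightarrow> nat \<times> nat" where
  "shift = (\<lambda>(i, j). (length A + i, length A + length L + j))"

lemma length_blocks: "length blocks = length A + length L + length L + length D"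
  by (simp add: blocks_def)

lemma nth_blocks_left: "i < length L \<Longrightarrow> blocks ! (length A + i) = b + L ! i"
  by (simp add: blocks_def nth_append)

lemma nth_blocks_right: "j < length L \<Longrightarrow> blocks ! (length A + length L + j) = c + L ! j"
  by (simp add: blocks_def nth_append)

lemma nth_blocks_cases:
  assumes "s < length blocks"
  obtains (outer) "z \<in># blocks ! s"
    | (left) i where "i < length L" "s = length A + i" "blocks ! s = b + L ! i"
    | (right) j where "j < length L" "s = length A + length L + j" "blocks ! s = c + L ! j"
proof -
  consider "s < length A" | i where "i < length L" "s = length A + i"
    | j where "j < length L" "s = length A + length L + j"
    | "length A + length L + length L \<le> s"
    by (metis add_diff_inverse_nat nat_add_left_cancel_less not_less)
  then show ?thesis
  proof cases
    case 1
    then have "blocks ! s \<in> set A"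
      by (simp add: blocks_def nth_append)
    with outer_blocks outer show ?thesis by blast
  next
    case 4
    then obtain r where r: "s = length A + length L + length L + r"
      using le_Suc_ex by blast
    with assms have "r < length D"
      by (simp add: length_blocks)
    moreover have "blocks ! s = D ! r"
      unfolding r blocks_def by (simp add: nth_append)
    ultimately have "blocks ! s \<in> set D"
      by simp
    with outer_blocks outer show ?thesis by blast
  qed (use nth_blocks_left nth_blocks_right left right in blast)+
qed

lemma inner_count_zero:
  assumes "i < length L" "v \<notin> V"
  shows "count (L ! i) v = 0"
  using inner_variables assms nth_mem by (metis count_eq_zero_iff subsetD)

lemma index_pairs_blocks:
  assumes N: "set_mset N \<subseteq> V"
  shows "index_pairs blocks (b + c + N)
           = shift ` {(i, j). i < length L \<and> j < length L \<and> L ! i + L ! j = N}"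
proof (intro equalityI subsetI)
  fix st assume "st \<in> index_pairs blocks (b + c + N)"
  then obtain s t where st: "st = (s, t)" "s \<le> t" "t < length blocks"
    and sum: "blocks ! s + blocks ! t = b + c + N"
    by (auto simp: index_pairs_def)
  have N_count: "count N v = 0" if "v \<notin> V" for v
    using N that by (metis count_eq_zero_iff subsetD)
  have no_z: "z \<notin># blocks ! s" "z \<notin># blocks ! t"
    using sum z_notin N_count[of z] by (metis count_eq_zero_iff union_iff)+
  have x_count: "count (blocks ! s + blocks ! t) x = count b x"
    using sum x_separates N_count[of x] by (simp add: not_in_iff)
  have y_count: "count (blocks ! s + blocks ! t) y = count c y"
    using sum y_separates N_count[of y] by (simp add: not_in_iff)
  have "0 < count b x" "0 < count c y"
    using x_separates(1) y_separates(1) by simp_all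
  from st have "s < length blocks"
    by simp
  then show "st \<in> shift ` {(i, j). i < length L \<and> j < length L \<and> L ! i + L ! j = N}"
  proof (cases rule: nth_blocks_cases)
    case outer
    with no_z show ?thesis by simp
  next
    case (left i)
    from \<open>t < length blocks\<close> show ?thesis
    proof (cases rule: nth_blocks_cases)
      case outer
      with no_z show ?thesis by simp
    next
      case t_left: (left j)
      with left t_left x_count \<open>0 < count b x\<close> x_separates(3) inner_count_zero show ?thesis
        by (simp add: not_in_iff)
    next
      case (right j)
      with left sum have "L ! i + L ! j = N"
        by (simp add: add.left_commute add.assoc)
      with left right st show ?thesis
        unfolding shift_def by force
    qed
  next
    case (right i)
    from \<open>t < length blocks\<close> show ?thesis
    proof (cases rule: nth_blocks_cases)
      case outer
      with no_z show ?thesis by simp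
    next
      case (left j)
      with right st show ?thesis by simp
    next
      case t_right: (right j)
      with right t_right y_count \<open>0 < count c y\<close> y_separates(3) inner_count_zero show ?thesis
        by (simp add: not_in_iff)
    qed
  qed
next
  fix st assume "st \<in> shift ` {(i, j). i < length L \<and> j < length L \<and> L ! i + L ! j = N}"
  then obtain i j where ij: "i < length L" "j < length L" "L ! i + L ! j = N"
    and st: "st = (length A + i, length A + length L + j)"
    by (auto simp: shift_def)
  have "blocks ! (length A + i) + blocks ! (length A + length L + j) = b + c + N"
    unfolding nth_blocks_left[OF ij(1)] nth_blocks_right[OF ij(2)] ij(3)[symmetric]
    by (simp add: ac_simps)
  with ij show "st \<in> index_pairs blocks (b + c + N)"
    unfolding st index_pairs_def length_blocks by simp
qed

lemma mono_shift: "mono shift"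
  by (auto simp: mono_def shift_def less_eq_prod_def split_beta)

lemma shift_less_iff: "shift p < shift q \<longleftrightarrow> p < q"
  by (cases p; cases q) (simp add: shift_def)

lemma Min_index_pairs_blocks:
  assumes "set_mset N \<subseteq> V" "index_pairs L N \<noteq> {}"
  shows "index_pairs blocks (b + c + N) \<noteq> {}"
    and "Min (index_pairs blocks (b + c + N)) = shift (Min (index_pairs L N))"
proof -
  let ?P = "{(i, j). i < length L \<and> j < length L \<and> L ! i + L ! j = N}"
  have "index_pairs L N \<subseteq> ?P"
    by (auto simp: index_pairs_def)
  with assms(2) have "?P \<noteq> {}"
    by blast
  moreover have "finite ?P"
    by (rule finite_subset[of _ "{..<length L} \<times> {..<length L}"]) auto
  ultimately show "index_pairs blocks (b + c + N) \<noteq> {}"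
    and "Min (index_pairs blocks (b + c + N)) = shift (Min (index_pairs L N))"
    unfolding index_pairs_blocks[OF assms(1)] Min_ordered_index_pairs[OF assms(2), symmetric]
    by (simp_all add: mono_Min_commute[OF mono_shift])
qed

lemma max_expr_blocks_less_iff:
  assumes "set_mset M \<subseteq> V" "set_mset N \<subseteq> V" "index_pairs L M \<noteq> {}" "index_pairs L N \<noteq> {}"
  shows "max_expr blocks (b + c + N) < max_expr blocks (b + c + M) \<longleftrightarrow> max_expr L N < max_expr L M"
  using Min_index_pairs_blocks[OF assms(1,3)] Min_index_pairs_blocks[OF assms(2,4)] assms(3,4)
  by (simp add: max_expr_less_iff shift_less_iff)

lemma blocks_left_add_right:
  assumes "i < length L" "j < length L"
  shows "b + c + (L ! i + L ! j) = blocks ! (length A + i) + blocks ! (length A + length L + j)"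
  unfolding nth_blocks_left[OF assms(1)] nth_blocks_right[OF assms(2)] by (simp add: ac_simps)

lemma blocks_left_right_in_set:
  assumes "i < length L" "j < length L"
  shows "blocks ! (length A + i) \<in> set blocks" "blocks ! (length A + length L + j) \<in> set blocks"
  using assms by (simp_all add: length_blocks)

end

lemma rooted_add4_prefix:
  "\<exists>D. rooted (m + 4) = map (add_mset (m + 3)) (rooted (m + 2)) @ D \<and> (\<forall>u\<in>set D. m + 4 \<in># u)"
proof (cases m)
  case 0
  then show ?thesis
    by (intro exI[of _ "[{#2, 4#}]"]) (simp add: numeral_eq_Suc add_mset_commute)
next
  case (Suc k)
  then have "k + 5 = m + 4" "k + 4 = m + 3" "k + 3 = m + 2"
    by simp_all
  with rooted_add5[of k] show ?thesis
    by (intro exI[of _ "map ((+) {#m + 4, m + 2#}) (rooted (k + 2))"]) auto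
qed

lemma rooted_add7_blocks:
  "\<exists>A D. rooted (m + 7) = A @ map ((+) {#m + 6, m + 5, m + 3#}) (rooted (m + 2))
                         @ map ((+) {#m + 7, m + 5, m + 3#}) (rooted (m + 2)) @ D
       \<and> (\<forall>u\<in>set A \<union> set D. m + 4 \<in># u)"
proof -
  obtain D where D: "rooted (m + 4) = map (add_mset (m + 3)) (rooted (m + 2)) @ D"
    and D_outer: "\<forall>u\<in>set D. m + 4 \<in># u"
    using rooted_add4_prefix by blast
  have "rooted (m + 7) = map (add_mset (m + 6)) (rooted (m + 5)) @ map ((+) {#m + 7, m + 5#}) (rooted (m + 4))"
    using rooted_add5[of "m + 2"] by (simp only: add.assoc numeral_plus_numeral semiring_norm)
  also have "rooted (m + 5) = map (add_mset (m + 4)) (rooted (m + 3)) @ map ((+) {#m + 5, m + 3#}) (rooted (m + 2))"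
    by (rule rooted_add5)
  finally show ?thesis
    unfolding D using D_outer
    by (intro exI[of _ "map (add_mset (m + 6) \<circ> add_mset (m + 4)) (rooted (m + 3))"]
        exI[of _ "map ((+) {#m + 7, m + 5#}) D"]) (auto simp: add_mset_commute)
qed

theorem lemma3p16:
  fixes n i j k l :: nat
  assumes "n \<ge> 7"
    and "i < length (rooted (n - 5))" "j < length (rooted (n - 5))"
    and "k < length (rooted (n - 5))" "l < length (rooted (n - 5))"
    and "rooted (n - 5) ! i + rooted (n - 5) ! k \<in> FJ2 (n - 5)"
    and "rooted (n - 5) ! j + rooted (n - 5) ! l \<in> FJ2 (n - 5)"
    and "R_greater (n - 5) (rooted (n - 5) ! i + rooted (n - 5) ! k)
                           (rooted (n - 5) ! j + rooted (n - 5) ! l)"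
  shows "let w = {#n, n - 1, n - 2, n - 2, n - 4, n - 4#} in
           w + (rooted (n - 5) ! i + rooted (n - 5) ! k) \<in> FJ2 n \<and>
           w + (rooted (n - 5) ! j + rooted (n - 5) ! l) \<in> FJ2 n \<and>
           R_greater n (w + (rooted (n - 5) ! i + rooted (n - 5) ! k))
                       (w + (rooted (n - 5) ! j + rooted (n - 5) ! l))"
proof -
  obtain m where n: "n = m + 7"
    using assms(1) by (metis add.commute le_Suc_ex)
  define L where "L = rooted (m + 2)"
  obtain A D where R: "rooted n = A @ map ((+) {#m + 6, m + 5, m + 3#}) L
                                    @ map ((+) {#m + 7, m + 5, m + 3#}) L @ D"
    and outer: "\<forall>u\<in>set A \<union> set D. m + 4 \<in># u"
    unfolding n L_def using rooted_add7_blocks by blast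
  interpret block_list A L D "{#m + 6, m + 5, m + 3#}" "{#m + 7, m + 5, m + 3#}" "{1..m + 2}"
    "m + 6" "m + 7" "m + 4"
    using outer rooted_variables unfolding L_def by unfold_locales auto
  have blocks: "rooted n = blocks"
    unfolding R blocks_def ..
  have predecessors: "n - 1 = m + 6" "n - 2 = m + 5" "n - 4 = m + 3"
    by (simp_all add: n)
  have multiplier: "{#n, n - 1, n - 2, n - 2, n - 4, n - 4#} = {#m + 6, m + 5, m + 3#} + {#m + 7, m + 5, m + 3#}"
    unfolding predecessors by (simp add: n add_mset_commute)
  have L: "rooted (n - 5) = L"
    by (simp add: n L_def)
  have indices: "i < length L" "j < length L" "k < length L" "l < length L"
    using assms(2-5) unfolding L .
  let ?w = "{#m + 6, m + 5, m + 3#} + {#m + 7, m + 5, m + 3#}"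
  have variables: "set_mset (L ! i' + L ! k') \<subseteq> {1..m + 2}" if "i' < length L" "k' < length L" for i' k'
    using that rooted_variables nth_mem unfolding L_def by fastforce
  have in_FJ2: "?w + (L ! i' + L ! k') \<in> FJ2 n" if "i' < length L" "k' < length L" for i' k'
    using blocks_left_add_right[OF that] blocks_left_right_in_set[OF that] rooted_subset_GJ
    unfolding blocks[symmetric] FJ2_def by blast
  have "max_expr L (L ! j + L ! l) < max_expr L (L ! i + L ! k)"
    using assms(8) unfolding R_greater_def L .
  then have "R_greater n (?w + (L ! i + L ! k)) (?w + (L ! j + L ! l))"
    unfolding R_greater_def blocks
    using max_expr_blocks_less_iff[OF variables variables index_pairs_nth_add_nonempty
        index_pairs_nth_add_nonempty] indices by blast
  with in_FJ2 indices show ?thesis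
    unfolding Let_def multiplier L by blast
qed

end
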